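(* For every $K\in\mathcal K(\mathcal H)^{ah}$ and $t\in\mathbb R$, $$\inf_{D\in\mathcal D(\mathcal B(\mathcal H))^{ah}}\|K+D\|=\inf_{\substack{d\in\mathcal D(\mathcal K(\mathcal H))^{ah}\\ \theta\in\mathbb R}}\|K+itI+d+i\theta I\|=\inf_{d\in\mathcal D(\mathcal K(\mathcal H))^{ah}}\|K+d\|.$$ Consequently the Finsler norm $\|Xb-bX\|_b$ for $X\in(\mathcal K+\mathbb C)^{ah}$ coincides with the quotient norm of the class of $X$ in each of $\mathcal K(\mathcal H)^{ah}/\mathcal D(\mathcal K(\mathcal H))^{ah}$ (after subtracting the scalar part), $(\mathcal K+\mathbb C)^{ah}/\mathcal D(\mathcal K+\mathbb C)^{ah}$, and $(\mathcal K(\mathcal H)^{ah}+\mathcal D(\mathcal B(\mathcal H))^{ah})/\mathcal D(\mathcal B(\mathcal H))^{ah}$.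
   Context: $\mathcal H$ is a separable infinite-dimensional Hilbert space with fixed orthonormal basis $\{e_i\}$; $\mathcal K(\mathcal H)$ compact operators; $ah$ = anti-Hermitian; $\mathcal D(\mathcal B(\mathcal H))$ bounded diagonal operators, $\mathcal D(\mathcal K(\mathcal H))=\mathcal D(\mathcal B(\mathcal H))\cap\mathcal K(\mathcal H)$; $\mathcal K+\mathbb C=\{K+\lambda I\}$, $\mathcal D(\mathcal K+\mathbb C)=\mathcal D(\mathcal K(\mathcal H))+\mathbb CI$. For $b$ a compact self-adjoint diagonal operator with pairwise distinct diagonal entries and $x=Xb-bX$ with $X\in(\mathcal K+\mathbb C)^{ah}$, $\|x\|_b=\inf\{\|Y\|:Y\in(\mathcal K+\mathbb C)^{ah},\ Yb-bY=x\}$. Quotient norms are the usual infimum norms. *)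

theory Defs
  imports Complex_Main
begin

text \<open>Model: the separable infinite-dimensional Hilbert space with fixed orthonormal
basis is realised as l2(nat), vectors being square-summable functions nat => complex,
with basis vectors e i.  Operators are maps on such functions; only their behaviour on
l2 vectors matters (equality of operators is equality on l2).\<close>

type_synonym vec = "nat \<Rightarrow> complex"
type_synonym op = "vec \<Rightarrow> vec"

definition l2 :: "vec \<Rightarrow> bool" where
  "l2 x \<longleftrightarrow> summable (\<lambda>n. (cmod (x n))^2)"

definition l2norm :: "vec \<Rightarrow> real" where
  "l2norm x = sqrt (\<Sum>n. (cmod (x n))^2)"

definition l2inner :: "vec \<Rightarrow> vec \<Rightarrow> complex" where
  "l2inner x y = (\<Sum>n. x n * cnj (y n))"

definition basis_vec :: "nat \<Rightarrow> vec" where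
  "basis_vec i = (\<lambda>n. if n = i then 1 else 0)"

definition op_eq :: "op \<Rightarrow> op \<Rightarrow> bool" where
  "op_eq S T \<longleftrightarrow> (\<forall>x. l2 x \<longrightarrow> S x = T x)"

definition op_add :: "op \<Rightarrow> op \<Rightarrow> op" where
  "op_add S T = (\<lambda>x n. S x n + T x n)"

definition op_sub :: "op \<Rightarrow> op \<Rightarrow> op" where
  "op_sub S T = (\<lambda>x n. S x n - T x n)"

definition op_scalar :: "complex \<Rightarrow> op" where
  "op_scalar c = (\<lambda>x n. c * x n)"

definition op_comm :: "op \<Rightarrow> op \<Rightarrow> op" where
  "op_comm X b = op_sub (X \<circ> b) (b \<circ> X)"

definition bounded_op :: "op \<Rightarrow> bool" where
  "bounded_op T \<longleftrightarrow>
     (\<forall>x. l2 x \<longrightarrow> l2 (T x)) \<and>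
     (\<forall>x y. l2 x \<longrightarrow> l2 y \<longrightarrow> T (\<lambda>n. x n + y n) = (\<lambda>n. T x n + T y n)) \<and>
     (\<forall>c x. l2 x \<longrightarrow> T (\<lambda>n. c * x n) = (\<lambda>n. c * T x n)) \<and>
     (\<exists>C. \<forall>x. l2 x \<longrightarrow> l2norm (T x) \<le> C * l2norm x)"

definition op_norm :: "op \<Rightarrow> real" where
  "op_norm T = Sup {l2norm (T x) | x. l2 x \<and> l2norm x \<le> 1}"

text \<open>compact: the image of every sequence in the closed unit ball has a Cauchy
(hence, l2 being complete, convergent) subsequence\<close>
definition compact_op :: "op \<Rightarrow> bool" where
  "compact_op T \<longleftrightarrow> bounded_op T \<and>
     (\<forall>xs :: nat \<Rightarrow> vec. (\<forall>k. l2 (xs k) \<and> l2norm (xs k) \<le> 1) \<longrightarrow>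
        (\<exists>r::nat \<Rightarrow> nat. strict_mono r \<and>
           (\<forall>\<epsilon>::real>0. \<exists>N::nat. \<forall>m\<ge>N. \<forall>n\<ge>N.
               l2norm (\<lambda>i. T (xs (r m)) i - T (xs (r n)) i) < \<epsilon>)))"

definition antiherm_op :: "op \<Rightarrow> bool" where
  "antiherm_op T \<longleftrightarrow> (\<forall>x y. l2 x \<longrightarrow> l2 y \<longrightarrow> l2inner (T x) y = - l2inner x (T y))"

definition selfadj_op :: "op \<Rightarrow> bool" where
  "selfadj_op T \<longleftrightarrow> (\<forall>x y. l2 x \<longrightarrow> l2 y \<longrightarrow> l2inner (T x) y = l2inner x (T y))"

definition diag_op :: "op \<Rightarrow> bool" where
  "diag_op T \<longleftrightarrow> bounded_op T \<and> (\<forall>i. \<exists>c. T (basis_vec i) = (\<lambda>n. c * basis_vec i n))"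

definition KC_op :: "op \<Rightarrow> bool" where
  "KC_op X \<longleftrightarrow> (\<exists>K0 c0. compact_op K0 \<and> op_eq X (op_add K0 (op_scalar c0)))"

definition Kah :: "op set" where "Kah = {K. compact_op K \<and> antiherm_op K}"
definition DBah :: "op set" where "DBah = {D. diag_op D \<and> antiherm_op D}"
definition DKah :: "op set" where "DKah = {D. diag_op D \<and> compact_op D \<and> antiherm_op D}"
definition KCah :: "op set" where "KCah = {X. bounded_op X \<and> KC_op X \<and> antiherm_op X}"
definition DKCah :: "op set" where "DKCah = {D. diag_op D \<and> KC_op D \<and> antiherm_op D}"

definition finsler_norm :: "op \<Rightarrow> op \<Rightarrow> real" where
  "finsler_norm b x = Inf {op_norm Y | Y. Y \<in> KCah \<and> op_eq (op_comm Y b) x}"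

end

theory Submission
  imports Defs "HOL-Analysis.Analysis"
begin

text \<open>Let \<open>P\<^sub>n\<close> and \<open>Q\<^sub>n = 1 - P\<^sub>n\<close> be the coordinate projections onto the first \<open>n\<close>
  basis vectors and onto the rest. For compact anti-Hermitian \<open>K\<close> and \<open>\<epsilon> > 0\<close>, compactness gives
  \<open>n\<close> with \<open>\<parallel>Q\<^sub>n K\<parallel> \<le> \<epsilon>/2\<close>, and taking adjoints \<open>\<parallel>K Q\<^sub>n\<parallel> \<le> \<epsilon>/2\<close>. For a bounded
  diagonal anti-Hermitian \<open>D\<close> the compact diagonal \<open>d = P\<^sub>n D\<close> satisfies
  \<open>K + d = P\<^sub>n (K + D) P\<^sub>n + P\<^sub>n K Q\<^sub>n + Q\<^sub>n K\<close>, hence \<open>\<parallel>K + d\<parallel> \<le> \<parallel>K + D\<parallel> + \<epsilon>\<close>; as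
  imaginary scalars are diagonal, the three infima coincide.

  For the Finsler norm, \<open>Y b - b Y = X b - b X\<close> says that \<open>X - Y\<close> commutes with \<open>b\<close>, and since
  the eigenvalues of \<open>b\<close> are distinct this forces \<open>X - Y\<close> to be diagonal: \<open>\<parallel>x\<parallel>\<^sub>b\<close> is the
  distance from \<open>X\<close> to the diagonal anti-Hermitian part of \<open>K + C\<close>. Writing \<open>X = K + c\<close>,
  anti-Hermitian \<open>X\<close> forces \<open>c\<close> to be imaginary and \<open>K\<close> to be anti-Hermitian, which reduces the other equalities to the first part.\<close>

section \<open>Square-summable sequences\<close>

lemma l2_if_partial_sums_bounded:
  assumes "\<And>n. (\<Sum>k<n. (cmod (z k))^2) \<le> B^2" "B \<ge> 0"
  shows "l2 z \<and> l2norm z \<le> B"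
proof -
  have s: "summable (\<lambda>k. (cmod (z k))^2)"
  proof (rule bounded_imp_summable[where B="B^2"])
    fix n show "(\<Sum>k\<le>n. (cmod (z k))^2) \<le> B^2"
      using assms(1)[of "Suc n"] by (simp add: lessThan_Suc_atMost)
  qed simp
  have "(\<Sum>k. (cmod (z k))^2) \<le> B^2" by (rule suminf_le_const[OF s assms(1)])
  hence "l2norm z \<le> sqrt (B^2)" unfolding l2norm_def by (rule real_sqrt_le_mono)
  thus ?thesis using s assms(2) by (simp add: l2_def)
qed

lemma l2norm_nonneg: "l2 x \<Longrightarrow> l2norm x \<ge> 0"
  unfolding l2norm_def l2_def by (simp add: suminf_nonneg)

lemma l2norm_sq: "l2 x \<Longrightarrow> (l2norm x)^2 = (\<Sum>n. (cmod (x n))^2)"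
  unfolding l2norm_def l2_def by (simp add: suminf_nonneg)

lemma l2_partial_sum_le: "l2 x \<Longrightarrow> (\<Sum>k<n. (cmod (x k))^2) \<le> (l2norm x)^2"
  unfolding l2norm_sq by (rule sum_le_suminf) (auto simp: l2_def)

lemma L2_set_le_l2norm:
  assumes x: "l2 x" shows "L2_set (\<lambda>k. cmod (x k)) {..<n} \<le> l2norm x"
proof -
  have "L2_set (\<lambda>k. cmod (x k)) {..<n} = sqrt (\<Sum>k<n. (cmod (x k))^2)" by (simp add: L2_set_def)
  also have "\<dots> \<le> sqrt ((l2norm x)^2)" using l2_partial_sum_le[OF x] by (rule real_sqrt_le_mono)
  also have "\<dots> = l2norm x" using l2norm_nonneg[OF x] by simp
  finally show ?thesis .
qed

lemma l2_add:
  assumes x: "l2 x" and y: "l2 y"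
  shows "l2 (\<lambda>k. x k + y k) \<and> l2norm (\<lambda>k. x k + y k) \<le> l2norm x + l2norm y"
proof (rule l2_if_partial_sums_bounded)
  fix n
  have "L2_set (\<lambda>k. cmod (x k + y k)) {..<n} \<le> L2_set (\<lambda>k. cmod (x k) + cmod (y k)) {..<n}"
    by (rule L2_set_mono) (auto simp: norm_triangle_ineq)
  also have "\<dots> \<le> L2_set (\<lambda>k. cmod (x k)) {..<n} + L2_set (\<lambda>k. cmod (y k)) {..<n}"
    by (rule L2_set_triangle_ineq)
  also have "\<dots> \<le> l2norm x + l2norm y"
    using L2_set_le_l2norm[OF x, of n] L2_set_le_l2norm[OF y, of n] by simp
  finally have "sqrt (\<Sum>k<n. (cmod (x k + y k))^2) \<le> l2norm x + l2norm y"
    by (simp add: L2_set_def)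
  thus "(\<Sum>k<n. (cmod (x k + y k))^2) \<le> (l2norm x + l2norm y)^2"
    by (rule sqrt_le_D)
qed (use l2norm_nonneg x y in auto)

lemma l2_scale:
  assumes x: "l2 x"
  shows "l2 (\<lambda>k. c * x k) \<and> l2norm (\<lambda>k. c * x k) = cmod c * l2norm x"
proof -
  have "summable (\<lambda>k. (cmod c)^2 * (cmod (x k))^2)" using x unfolding l2_def by (rule summable_mult)
  hence s: "l2 (\<lambda>k. c * x k)" by (simp add: l2_def norm_mult power_mult_distrib)
  have "l2norm (\<lambda>k. c * x k) = sqrt (\<Sum>k. (cmod c)^2 * (cmod (x k))^2)"
    by (simp add: l2norm_def norm_mult power_mult_distrib)
  also have "\<dots> = sqrt ((cmod c)^2 * (\<Sum>k. (cmod (x k))^2))"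
    using x unfolding l2_def by (simp add: suminf_mult)
  also have "\<dots> = cmod c * l2norm x" by (simp add: l2norm_def real_sqrt_mult)
  finally show ?thesis using s by simp
qed

lemma l2_neg: "l2 x \<Longrightarrow> l2 (\<lambda>k. - x k) \<and> l2norm (\<lambda>k. - x k) = l2norm x"
  using l2_scale[of x "-1"] by simp

lemma l2_diff:
  assumes x: "l2 x" and y: "l2 y"
  shows "l2 (\<lambda>k. x k - y k) \<and> l2norm (\<lambda>k. x k - y k) \<le> l2norm x + l2norm y"
  using l2_add[OF x l2_neg[OF y, THEN conjunct1]] l2_neg[OF y] by simp

lemma l2_zero: "l2 (\<lambda>k. 0) \<and> l2norm (\<lambda>k. 0) = 0"
  by (simp add: l2_def l2norm_def)

lemma l2_mono:
  assumes y: "l2 y" and le: "\<And>k. cmod (x k) \<le> cmod (y k)"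
  shows "l2 x \<and> l2norm x \<le> l2norm y"
proof (rule l2_if_partial_sums_bounded)
  fix n
  have "(\<Sum>k<n. (cmod (x k))^2) \<le> (\<Sum>k<n. (cmod (y k))^2)"
    by (rule sum_mono) (simp add: le power_mono)
  thus "(\<Sum>k<n. (cmod (x k))^2) \<le> (l2norm y)^2" using l2_partial_sum_le[OF y, of n] by linarith
qed (rule l2norm_nonneg[OF y])

lemma cmod_le_l2norm:
  assumes x: "l2 x" shows "cmod (x k) \<le> l2norm x"
proof -
  have "(cmod (x k))^2 \<le> (\<Sum>j<Suc k. (cmod (x j))^2)" by (rule member_le_sum) auto
  also have "\<dots> \<le> (l2norm x)^2" by (rule l2_partial_sum_le[OF x])
  finally show ?thesis using l2norm_nonneg[OF x] by (simp add: power2_le_iff_abs_le)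
qed

lemma l2norm_eq_0D: "l2 x \<Longrightarrow> l2norm x = 0 \<Longrightarrow> x = (\<lambda>k. 0)"
  using cmod_le_l2norm by (auto intro!: ext) (metis norm_le_zero_iff)

lemma l2_norm_prod_summable:
  assumes x: "l2 x" and y: "l2 y"
  shows "summable (\<lambda>n. cmod (x n) * cmod (y n))"
proof (rule summable_comparison_test'[where g="\<lambda>n. (cmod (x n))^2 + (cmod (y n))^2" and N=0])
  fix n
  have "2 * (cmod (x n) * cmod (y n)) \<le> (cmod (x n))^2 + (cmod (y n))^2"
    using sum_squares_bound[of "cmod (x n)" "cmod (y n)"] by simp
  moreover have "0 \<le> cmod (x n) * cmod (y n)" by simp
  ultimately show "norm (cmod (x n) * cmod (y n)) \<le> (cmod (x n))^2 + (cmod (y n))^2"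
    by (simp only: real_norm_def abs_mult abs_norm_cancel)
qed (use x y in \<open>simp add: l2_def summable_add\<close>)

lemma l2inner_summable:
  assumes "l2 x" "l2 y" shows "summable (\<lambda>n. x n * cnj (y n))"
  by (rule summable_norm_cancel) (simp add: norm_mult l2_norm_prod_summable assms)

lemma l2inner_Cauchy_Schwarz:
  assumes x: "l2 x" and y: "l2 y"
  shows "cmod (l2inner x y) \<le> l2norm x * l2norm y"
proof -
  have "cmod (l2inner x y) \<le> (\<Sum>n. cmod (x n) * cmod (y n))"
    unfolding l2inner_def using summable_norm[of "\<lambda>n. x n * cnj (y n)"]
    by (simp add: norm_mult l2_norm_prod_summable x y)
  also have "\<dots> \<le> l2norm x * l2norm y"
  proof (rule suminf_le_const[OF l2_norm_prod_summable[OF x y]])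
    fix n
    have "(\<Sum>k<n. cmod (x k) * cmod (y k)) = (\<Sum>k<n. \<bar>cmod (x k)\<bar> * \<bar>cmod (y k)\<bar>)" by simp
    also have "\<dots> \<le> L2_set (\<lambda>k. cmod (x k)) {..<n} * L2_set (\<lambda>k. cmod (y k)) {..<n}"
      by (rule L2_set_mult_ineq)
    also have "\<dots> \<le> l2norm x * l2norm y"
      by (rule mult_mono) (auto simp: L2_set_le_l2norm x y l2norm_nonneg)
    finally show "(\<Sum>k<n. cmod (x k) * cmod (y k)) \<le> l2norm x * l2norm y" .
  qed
  finally show ?thesis .
qed

lemma l2inner_self:
  assumes x: "l2 x" shows "l2inner x x = complex_of_real ((l2norm x)^2)"
proof -
  have "l2inner x x = (\<Sum>n. complex_of_real ((cmod (x n))^2))"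
    unfolding l2inner_def by (simp only: complex_norm_square[symmetric])
  also have "\<dots> = complex_of_real (\<Sum>n. (cmod (x n))^2)"
    using x unfolding l2_def by (rule suminf_of_real[symmetric])
  finally show ?thesis using l2norm_sq[OF x] by simp
qed

lemma l2inner_add_left:
  "l2 x \<Longrightarrow> l2 y \<Longrightarrow> l2 z \<Longrightarrow> l2inner (\<lambda>n. x n + y n) z = l2inner x z + l2inner y z"
  unfolding l2inner_def using l2inner_summable by (simp add: distrib_right suminf_add)

lemma l2inner_diff_left:
  "l2 x \<Longrightarrow> l2 y \<Longrightarrow> l2 z \<Longrightarrow> l2inner (\<lambda>n. x n - y n) z = l2inner x z - l2inner y z"
  unfolding l2inner_def using l2inner_summable by (simp add: left_diff_distrib suminf_diff)

lemma l2inner_scale_left: "l2 x \<Longrightarrow> l2 z \<Longrightarrow> l2inner (\<lambda>n. c * x n) z = c * l2inner x z"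
  unfolding l2inner_def using l2inner_summable by (simp add: mult.assoc suminf_mult)

lemma l2inner_add_right:
  "l2 x \<Longrightarrow> l2 y \<Longrightarrow> l2 z \<Longrightarrow> l2inner x (\<lambda>n. y n + z n) = l2inner x y + l2inner x z"
  unfolding l2inner_def using l2inner_summable by (simp add: distrib_left suminf_add)

lemma l2inner_diff_right:
  "l2 x \<Longrightarrow> l2 y \<Longrightarrow> l2 z \<Longrightarrow> l2inner x (\<lambda>n. y n - z n) = l2inner x y - l2inner x z"
  unfolding l2inner_def using l2inner_summable by (simp add: right_diff_distrib suminf_diff)

lemma l2inner_scale_right: "l2 x \<Longrightarrow> l2 y \<Longrightarrow> l2inner x (\<lambda>n. c * y n) = cnj c * l2inner x y"
  unfolding l2inner_def using suminf_mult[OF l2inner_summable, of x y "cnj c"]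
  by (simp add: ac_simps)

lemma basis_vec_l2: "l2 (basis_vec i) \<and> l2norm (basis_vec i) = 1"
proof -
  have e: "(\<lambda>n. (cmod (basis_vec i n))^2) = (\<lambda>n. if n = i then 1 else 0)"
    by (auto simp: basis_vec_def)
  have "summable (\<lambda>n. if n = i then (1::real) else 0)"
    by (rule summable_finite[of "{i}"]) auto
  moreover have "(\<Sum>n. if n = i then (1::real) else 0) = 1"
    by (subst suminf_finite[of "{i}"]) auto
  ultimately show ?thesis unfolding l2_def l2norm_def e by simp
qed

lemma l2inner_basis_right: "l2inner x (basis_vec k) = x k"
proof -
  have "l2inner x (basis_vec k) = (\<Sum>n\<in>{k}. x n * cnj (basis_vec k n))"
    unfolding l2inner_def by (rule suminf_finite) (auto simp: basis_vec_def)
  thus ?thesis by (simp add: basis_vec_def)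
qed

lemma l2inner_basis_left: "l2inner (basis_vec k) x = cnj (x k)"
proof -
  have "l2inner (basis_vec k) x = (\<Sum>n\<in>{k}. basis_vec k n * cnj (x n))"
    unfolding l2inner_def by (rule suminf_finite) (auto simp: basis_vec_def)
  thus ?thesis by (simp add: basis_vec_def)
qed

definition trunc_vec :: "nat \<Rightarrow> (nat \<Rightarrow> complex) \<Rightarrow> nat \<Rightarrow> complex" where
  "trunc_vec n v = (\<lambda>k. if k < n then v k else 0)"

definition tail_vec :: "nat \<Rightarrow> (nat \<Rightarrow> complex) \<Rightarrow> nat \<Rightarrow> complex" where
  "tail_vec n v = (\<lambda>k. if k < n then 0 else v k)"

lemma trunc_vec_l2: "l2 v \<Longrightarrow> l2 (trunc_vec n v) \<and> l2norm (trunc_vec n v) \<le> l2norm v"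
  by (rule l2_mono) (auto simp: trunc_vec_def)

lemma tail_vec_l2: "l2 v \<Longrightarrow> l2 (tail_vec n v) \<and> l2norm (tail_vec n v) \<le> l2norm v"
  by (rule l2_mono) (auto simp: tail_vec_def)

lemma trunc_tail_split: "x = (\<lambda>k. trunc_vec n x k + tail_vec n x k)"
  by (auto simp: trunc_vec_def tail_vec_def)

lemma l2inner_trunc_vec: "l2inner (trunc_vec n x) y = l2inner x (trunc_vec n y)"
  unfolding l2inner_def trunc_vec_def by (rule arg_cong[where f=suminf]) auto

lemma l2inner_tail_vec: "l2inner (tail_vec n x) y = l2inner x (tail_vec n y)"
  unfolding l2inner_def tail_vec_def by (rule arg_cong[where f=suminf]) auto

lemma tail_vec_small:
  assumes v: "l2 v" and e: "\<epsilon> > 0"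
  obtains n0 where "\<And>n. n \<ge> n0 \<Longrightarrow> l2norm (tail_vec n v) < \<epsilon>"
proof -
  let ?a = "\<lambda>k. (cmod (v k))^2"
  have s: "summable ?a" using v by (simp add: l2_def)
  have "(\<epsilon>/2)^2 > 0" using e by simp
  with summable_LIMSEQ[OF s] obtain n0
    where n0: "\<And>n. n \<ge> n0 \<Longrightarrow> dist (\<Sum>k<n. ?a k) (suminf ?a) < (\<epsilon>/2)^2"
    unfolding LIMSEQ_def by blast
  have "l2norm (tail_vec n v) < \<epsilon>" if n: "n \<ge> n0" for n
  proof -
    have le: "(\<Sum>k<n. ?a k) \<le> suminf ?a" by (rule sum_le_suminf[OF s]) auto
    have d: "suminf ?a - (\<Sum>k<n. ?a k) < (\<epsilon>/2)^2" using n0[OF n] le by (simp add: dist_real_def)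
    have "l2norm (tail_vec n v) \<le> \<epsilon>/2"
    proof (rule l2_if_partial_sums_bounded[THEN conjunct2])
      fix m
      have "(\<Sum>k<m. (cmod (tail_vec n v k))^2) \<le> suminf ?a - (\<Sum>k<n. ?a k)"
      proof (cases "m \<le> n")
        case True
        hence "(\<Sum>k<m. (cmod (tail_vec n v k))^2) = 0" by (auto simp: tail_vec_def intro!: sum.neutral)
        thus ?thesis using le by simp
      next
        case False
        have split: "{..<m} = {..<n} \<union> {n..<m}" using False by auto
        have "(\<Sum>k<m. (cmod (tail_vec n v k))^2) = (\<Sum>k\<in>{n..<m}. ?a k)"
          unfolding split by (subst sum.union_disjoint) (auto simp: tail_vec_def)
        also have "\<dots> = (\<Sum>k<m. ?a k) - (\<Sum>k<n. ?a k)"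
          unfolding split by (subst sum.union_disjoint) auto
        also have "(\<Sum>k<m. ?a k) \<le> suminf ?a" by (rule sum_le_suminf[OF s]) auto
        finally show ?thesis by simp
      qed
      thus "(\<Sum>k<m. (cmod (tail_vec n v k))^2) \<le> (\<epsilon>/2)^2" using d by linarith
    qed (use e in simp)
    thus ?thesis using e by linarith
  qed
  thus ?thesis using that by blast
qed

section \<open>Bounded operators\<close>

lemma bounded_opD:
  assumes "bounded_op T"
  shows bounded_op_l2: "l2 x \<Longrightarrow> l2 (T x)"
    and bounded_op_add: "l2 x \<Longrightarrow> l2 y \<Longrightarrow> T (\<lambda>n. x n + y n) = (\<lambda>n. T x n + T y n)"
    and bounded_op_scale: "l2 x \<Longrightarrow> T (\<lambda>n. c * x n) = (\<lambda>n. c * T x n)"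
    and bounded_op_bound: "\<exists>C. \<forall>x. l2 x \<longrightarrow> l2norm (T x) \<le> C * l2norm x"
  using assms unfolding bounded_op_def by blast+

lemma bounded_opI:
  assumes "\<And>x. l2 x \<Longrightarrow> l2 (T x)"
    and "\<And>x y. l2 x \<Longrightarrow> l2 y \<Longrightarrow> T (\<lambda>n. x n + y n) = (\<lambda>n. T x n + T y n)"
    and "\<And>c x. l2 x \<Longrightarrow> T (\<lambda>n. c * x n) = (\<lambda>n. c * T x n)"
    and "\<And>x. l2 x \<Longrightarrow> l2norm (T x) \<le> C * l2norm x"
  shows "bounded_op T"
  using assms unfolding bounded_op_def by blast

lemma bounded_op_zero: "bounded_op T \<Longrightarrow> T (\<lambda>k. 0) = (\<lambda>k. 0)"
  using bounded_op_scale[OF _ l2_zero[THEN conjunct1], of T 0] by simp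

lemma bounded_op_diff:
  assumes T: "bounded_op T" and x: "l2 x" and y: "l2 y"
  shows "T (\<lambda>n. x n - y n) = (\<lambda>n. T x n - T y n)"
proof -
  have y': "l2 (\<lambda>n. (-1) * y n)" using l2_scale[OF y] by blast
  have "T (\<lambda>n. x n - y n) = T (\<lambda>n. x n + (-1) * y n)" by simp
  also have "\<dots> = (\<lambda>n. T x n + T (\<lambda>n. (-1) * y n) n)" by (rule bounded_op_add[OF T x y'])
  also have "\<dots> = (\<lambda>n. T x n - T y n)" using bounded_op_scale[OF T y, of "-1"] by simp
  finally show ?thesis .
qed

lemma bounded_op_bound_nonneg:
  assumes "bounded_op T"
  obtains C where "C \<ge> 0" "\<And>x. l2 x \<Longrightarrow> l2norm (T x) \<le> C * l2norm x"
proof -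
  obtain C where C: "\<And>x. l2 x \<Longrightarrow> l2norm (T x) \<le> C * l2norm x"
    using bounded_op_bound[OF assms] by blast
  have "l2norm (T x) \<le> max C 0 * l2norm x" if "l2 x" for x
    using C[OF that] mult_right_mono[OF max.cobounded1[of C 0] l2norm_nonneg[OF that]] by linarith
  thus ?thesis using that[of "max C 0"] by simp
qed

lemma op_norm_bdd_above:
  assumes "bounded_op T" shows "bdd_above {l2norm (T x) | x. l2 x \<and> l2norm x \<le> 1}"
proof -
  obtain C where "C \<ge> 0" and C: "\<And>x. l2 x \<Longrightarrow> l2norm (T x) \<le> C * l2norm x"
    using bounded_op_bound_nonneg[OF assms] by blast
  hence "l2norm (T x) \<le> C" if "l2 x" "l2norm x \<le> 1" for x
    using C[OF that(1)] mult_left_mono[OF that(2) \<open>C \<ge> 0\<close>] by simp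
  thus ?thesis unfolding bdd_above_def by blast
qed

lemma l2norm_le_op_norm:
  assumes "bounded_op T" "l2 x" "l2norm x \<le> 1" shows "l2norm (T x) \<le> op_norm T"
  unfolding op_norm_def by (rule cSup_upper[OF _ op_norm_bdd_above[OF assms(1)]]) (use assms in blast)

lemma op_norm_nonneg:
  assumes "bounded_op T" shows "op_norm T \<ge> 0"
  using l2norm_le_op_norm[OF assms l2_zero[THEN conjunct1]] l2norm_nonneg
    bounded_op_l2[OF assms l2_zero[THEN conjunct1]] l2_zero by fastforce

lemma op_norm_le:
  assumes "\<And>x. l2 x \<Longrightarrow> l2norm x \<le> 1 \<Longrightarrow> l2norm (T x) \<le> M" shows "op_norm T \<le> M"
  unfolding op_norm_def
proof (rule cSup_least)
  show "{l2norm (T x) |x. l2 x \<and> l2norm x \<le> 1} \<noteq> {}" using l2_zero by fastforce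
qed (use assms in blast)

lemma op_eqI: "(\<And>x. l2 x \<Longrightarrow> S x = T x) \<Longrightarrow> op_eq S T"
  unfolding op_eq_def by blast

lemma op_eqD: "op_eq S T \<Longrightarrow> l2 x \<Longrightarrow> S x = T x"
  unfolding op_eq_def by blast

lemma op_norm_cong:
  assumes "op_eq S T" shows "op_norm S = op_norm T"
proof -
  have "{l2norm (S x) |x. l2 x \<and> l2norm x \<le> 1} = {l2norm (T x) |x. l2 x \<and> l2norm x \<le> 1}"
    by (rule Collect_cong) (metis op_eqD[OF assms])
  thus ?thesis unfolding op_norm_def by simp
qed

lemma op_sub_eq_op_add_neg: "op_sub S T = op_add S (\<lambda>x n. - T x n)"
  by (auto simp: op_sub_def op_add_def)

lemma bounded_op_op_add:
  assumes S: "bounded_op S" and T: "bounded_op T" shows "bounded_op (op_add S T)"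
proof -
  obtain C1 where C1: "\<And>x. l2 x \<Longrightarrow> l2norm (S x) \<le> C1 * l2norm x" using bounded_op_bound[OF S] by blast
  obtain C2 where C2: "\<And>x. l2 x \<Longrightarrow> l2norm (T x) \<le> C2 * l2norm x" using bounded_op_bound[OF T] by blast
  show ?thesis unfolding op_add_def
  proof (rule bounded_opI[where C="C1 + C2"])
    fix x assume x: "l2 x"
    show "l2 (\<lambda>n. S x n + T x n)" using l2_add[OF bounded_op_l2[OF S x] bounded_op_l2[OF T x]] by blast
    have "l2norm (\<lambda>n. S x n + T x n) \<le> l2norm (S x) + l2norm (T x)"
      using l2_add[OF bounded_op_l2[OF S x] bounded_op_l2[OF T x]] by blast
    also have "\<dots> \<le> (C1 + C2) * l2norm x" using C1[OF x] C2[OF x] by (simp add: algebra_simps)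
    finally show "l2norm (\<lambda>n. S x n + T x n) \<le> (C1 + C2) * l2norm x" .
  qed (simp_all add: bounded_op_add[OF S] bounded_op_add[OF T] bounded_op_scale[OF S]
        bounded_op_scale[OF T] algebra_simps)
qed

lemma bounded_op_scalar: "bounded_op (op_scalar c)"
  unfolding op_scalar_def by (rule bounded_opI[where C="cmod c"]) (auto simp: l2_scale algebra_simps)

lemma bounded_op_neg:
  assumes T: "bounded_op T" shows "bounded_op (\<lambda>x n. - T x n)"
proof -
  obtain C where C: "\<And>x. l2 x \<Longrightarrow> l2norm (T x) \<le> C * l2norm x" using bounded_op_bound[OF T] by blast
  show ?thesis
    by (rule bounded_opI[where C=C])
       (auto simp: l2_neg bounded_op_l2[OF T] bounded_op_add[OF T] bounded_op_scale[OF T] C)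
qed

lemma bounded_op_op_sub: "bounded_op S \<Longrightarrow> bounded_op T \<Longrightarrow> bounded_op (op_sub S T)"
  unfolding op_sub_eq_op_add_neg by (intro bounded_op_op_add bounded_op_neg)

lemma bounded_op_trunc:
  assumes T: "bounded_op T" shows "bounded_op (\<lambda>x. trunc_vec n (T x))"
proof -
  obtain C where C: "\<And>x. l2 x \<Longrightarrow> l2norm (T x) \<le> C * l2norm x" using bounded_op_bound[OF T] by blast
  show ?thesis
  proof (rule bounded_opI[where C=C])
    fix x assume x: "l2 x"
    show "l2 (trunc_vec n (T x))" "l2norm (trunc_vec n (T x)) \<le> C * l2norm x"
      using trunc_vec_l2[OF bounded_op_l2[OF T x], of n] C[OF x] by auto
  qed (auto simp: bounded_op_add[OF T] bounded_op_scale[OF T] trunc_vec_def)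
qed

section \<open>Compact operators\<close>

definition l2_Cauchy :: "(nat \<Rightarrow> nat \<Rightarrow> complex) \<Rightarrow> bool" where
  "l2_Cauchy ys \<longleftrightarrow> (\<forall>\<epsilon>>0. \<exists>N. \<forall>m\<ge>N. \<forall>n\<ge>N. l2norm (\<lambda>i. ys m i - ys n i) < \<epsilon>)"

lemma compact_op_iff:
  "compact_op T \<longleftrightarrow> bounded_op T \<and> (\<forall>xs :: nat \<Rightarrow> nat \<Rightarrow> complex. (\<forall>k. l2 (xs k) \<and> l2norm (xs k) \<le> 1) \<longrightarrow>
     (\<exists>r. strict_mono r \<and> l2_Cauchy (\<lambda>k. T (xs (r k)))))"
  unfolding compact_op_def l2_Cauchy_def by simp

lemma compact_op_bounded: "compact_op T \<Longrightarrow> bounded_op T"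
  unfolding compact_op_iff by blast

lemma compact_opE:
  fixes xs :: "nat \<Rightarrow> nat \<Rightarrow> complex"
  assumes "compact_op T" "\<And>k. l2 (xs k) \<and> l2norm (xs k) \<le> 1"
  obtains r where "strict_mono r" "l2_Cauchy (\<lambda>k. T (xs (r k)))"
  using assms unfolding compact_op_iff by blast

lemma compact_opI:
  assumes "bounded_op T"
    and "\<And>xs :: nat \<Rightarrow> nat \<Rightarrow> complex. (\<And>k. l2 (xs k) \<and> l2norm (xs k) \<le> 1) \<Longrightarrow>
           \<exists>r. strict_mono r \<and> l2_Cauchy (\<lambda>k. T (xs (r k)))"
  shows "compact_op T"
  using assms unfolding compact_op_iff by blast

lemma l2_CauchyD:
  assumes "l2_Cauchy ys" "\<epsilon> > 0"
  obtains N where "\<And>m n. m \<ge> N \<Longrightarrow> n \<ge> N \<Longrightarrow> l2norm (\<lambda>i. ys m i - ys n i) < \<epsilon>"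
  using assms unfolding l2_Cauchy_def by blast

lemma l2_Cauchy_subseq:
  assumes "l2_Cauchy ys" "strict_mono r" shows "l2_Cauchy (\<lambda>k. ys (r k))"
  unfolding l2_Cauchy_def
proof (intro allI impI)
  fix \<epsilon> :: real assume "\<epsilon> > 0"
  then obtain N where "\<And>m n. m \<ge> N \<Longrightarrow> n \<ge> N \<Longrightarrow> l2norm (\<lambda>i. ys m i - ys n i) < \<epsilon>"
    using l2_CauchyD[OF assms(1)] by blast
  moreover have "N \<le> r m" if "N \<le> m" for m using seq_suble[OF assms(2), of m] that by linarith
  ultimately show "\<exists>N. \<forall>m\<ge>N. \<forall>n\<ge>N. l2norm (\<lambda>i. ys (r m) i - ys (r n) i) < \<epsilon>"
    by blast
qed

lemma l2_Cauchy_add: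
  assumes ys: "\<And>k. l2 (ys k)" and zs: "\<And>k. l2 (zs k)" and "l2_Cauchy ys" "l2_Cauchy zs"
  shows "l2_Cauchy (\<lambda>k i. ys k i + zs k i)"
  unfolding l2_Cauchy_def
proof (intro allI impI)
  fix \<epsilon> :: real assume "\<epsilon> > 0"
  hence "\<epsilon>/2 > 0" by simp
  obtain N1 where N1: "\<And>m n. m \<ge> N1 \<Longrightarrow> n \<ge> N1 \<Longrightarrow> l2norm (\<lambda>i. ys m i - ys n i) < \<epsilon>/2"
    using l2_CauchyD[OF assms(3) \<open>\<epsilon>/2 > 0\<close>] by blast
  obtain N2 where N2: "\<And>m n. m \<ge> N2 \<Longrightarrow> n \<ge> N2 \<Longrightarrow> l2norm (\<lambda>i. zs m i - zs n i) < \<epsilon>/2"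
    using l2_CauchyD[OF assms(4) \<open>\<epsilon>/2 > 0\<close>] by blast
  have "l2norm (\<lambda>i. (ys m i + zs m i) - (ys n i + zs n i)) < \<epsilon>"
    if "m \<ge> max N1 N2" "n \<ge> max N1 N2" for m n
  proof -
    have "(\<lambda>i. (ys m i + zs m i) - (ys n i + zs n i)) = (\<lambda>i. (ys m i - ys n i) + (zs m i - zs n i))"
      by (simp add: algebra_simps)
    moreover have "l2norm (\<lambda>i. (ys m i - ys n i) + (zs m i - zs n i))
        \<le> l2norm (\<lambda>i. ys m i - ys n i) + l2norm (\<lambda>i. zs m i - zs n i)"
      using l2_add l2_diff ys zs by blast
    ultimately show ?thesis using N1[of m n] N2[of m n] that by simp
  qed
  thus "\<exists>N. \<forall>m\<ge>N. \<forall>n\<ge>N. l2norm (\<lambda>i. (ys m i + zs m i) - (ys n i + zs n i)) < \<epsilon>" by blast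
qed

lemma l2_Cauchy_neg:
  assumes "\<And>k. l2 (ys k)" "l2_Cauchy ys" shows "l2_Cauchy (\<lambda>k i. - ys k i)"
proof -
  have "l2norm (\<lambda>i. - ys m i - - ys n i) = l2norm (\<lambda>i. ys m i - ys n i)" for m n
    using l2_neg[OF l2_diff[OF assms(1)[of m] assms(1)[of n], THEN conjunct1]] by simp
  thus ?thesis using assms(2) unfolding l2_Cauchy_def by simp
qed

lemma l2_single:
  "l2 (\<lambda>j. if j = k then z else 0) \<and> l2norm (\<lambda>j. if j = k then z else 0) = cmod z"
proof -
  have "(\<lambda>j. if j = k then z else 0) = (\<lambda>j. z * basis_vec k j)" by (auto simp: basis_vec_def)
  thus ?thesis using l2_scale[OF basis_vec_l2[THEN conjunct1]] basis_vec_l2 by simp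
qed

lemma l2_Cauchy_single:
  assumes "Cauchy a" shows "l2_Cauchy (\<lambda>m j. if j = k then a m else 0)"
proof -
  have "(\<lambda>j. (if j = k then a m else 0) - (if j = k then a n else 0))
      = (\<lambda>j. if j = k then a m - a n else 0)" for m n
    by auto
  thus ?thesis using assms unfolding l2_Cauchy_def Cauchy_def by (simp add: l2_single dist_norm)
qed

lemma compact_op_add:
  assumes A: "compact_op A" and B: "compact_op B" shows "compact_op (op_add A B)"
proof (rule compact_opI)
  show "bounded_op (op_add A B)" using A B by (intro bounded_op_op_add compact_op_bounded)
next
  fix xs :: "nat \<Rightarrow> nat \<Rightarrow> complex" assume xs: "\<And>k. l2 (xs k) \<and> l2norm (xs k) \<le> 1"
  obtain r1 where r1: "strict_mono r1" and c1: "l2_Cauchy (\<lambda>k. A (xs (r1 k)))"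
    using A xs by (rule compact_opE)
  obtain r2 where r2: "strict_mono r2" and c2: "l2_Cauchy (\<lambda>k. B (xs (r1 (r2 k))))"
    using B xs by (rule compact_opE[of B "\<lambda>k. xs (r1 k)"])
  have l2A: "l2 (A (xs (r1 (r2 k))))" and l2B: "l2 (B (xs (r1 (r2 k))))" for k
    using bounded_op_l2[OF compact_op_bounded] A B xs by blast+
  have "l2_Cauchy (\<lambda>k i. A (xs (r1 (r2 k))) i + B (xs (r1 (r2 k))) i)"
    by (rule l2_Cauchy_add[OF l2A l2B l2_Cauchy_subseq[OF c1 r2] c2])
  thus "\<exists>r. strict_mono r \<and> l2_Cauchy (\<lambda>k. op_add A B (xs (r k)))"
    using strict_mono_o[OF r1 r2] unfolding op_add_def by (auto intro!: exI[of _ "r1 \<circ> r2"])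
qed

lemma compact_op_neg:
  assumes A: "compact_op A" shows "compact_op (\<lambda>x n. - A x n)"
proof (rule compact_opI)
  show "bounded_op (\<lambda>x n. - A x n)" using A by (intro bounded_op_neg compact_op_bounded)
next
  fix xs :: "nat \<Rightarrow> nat \<Rightarrow> complex" assume xs: "\<And>k. l2 (xs k) \<and> l2norm (xs k) \<le> 1"
  obtain r where r: "strict_mono r" and c: "l2_Cauchy (\<lambda>k. A (xs (r k)))"
    using A xs by (rule compact_opE)
  have "l2 (A (xs (r k)))" for k using bounded_op_l2[OF compact_op_bounded[OF A]] xs by blast
  thus "\<exists>r. strict_mono r \<and> l2_Cauchy (\<lambda>k i. - A (xs (r k)) i)"
    using r l2_Cauchy_neg[OF _ c] by blast
qed

lemma compact_op_sub: "compact_op A \<Longrightarrow> compact_op B \<Longrightarrow> compact_op (op_sub A B)"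
  unfolding op_sub_eq_op_add_neg by (intro compact_op_add compact_op_neg)

lemma compact_op_zero: "compact_op (\<lambda>x n. 0)"
proof (rule compact_opI)
  show "bounded_op (\<lambda>x n. 0)" using bounded_op_scalar[of 0] by (simp add: op_scalar_def)
  show "\<exists>r :: nat \<Rightarrow> nat. strict_mono r \<and> l2_Cauchy (\<lambda>k n. 0)"
    using strict_mono_id by (auto simp: l2_Cauchy_def l2_zero)
qed

lemma compact_op_coord:
  assumes T: "bounded_op T" shows "compact_op (\<lambda>x j. if j = k then T x k else 0)"
proof (rule compact_opI)
  obtain C where "C \<ge> 0" and C: "\<And>x. l2 x \<Longrightarrow> l2norm (T x) \<le> C * l2norm x"
    using bounded_op_bound_nonneg[OF T] by blast
  have coord: "cmod (T x k) \<le> C * l2norm x" if "l2 x" for x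
    using cmod_le_l2norm[OF bounded_op_l2[OF T that], of k] C[OF that] by linarith
  show "bounded_op (\<lambda>x j. if j = k then T x k else 0)"
    by (rule bounded_opI[where C=C])
       (auto simp: l2_single coord bounded_op_add[OF T] bounded_op_scale[OF T])
  fix xs :: "nat \<Rightarrow> nat \<Rightarrow> complex" assume xs: "\<And>k. l2 (xs k) \<and> l2norm (xs k) \<le> 1"
  have "cmod (T (xs m) k) \<le> C" for m
    using coord[of "xs m"] mult_left_mono[of "l2norm (xs m)" 1 C] xs \<open>C \<ge> 0\<close> by force
  hence "bounded (range (\<lambda>m. T (xs m) k))" unfolding bounded_iff by auto
  then obtain l r where r: "strict_mono r" and "((\<lambda>m. T (xs m) k) \<circ> r) \<longlonglongrightarrow> l"
    using bounded_imp_convergent_subsequence by blast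
  hence "Cauchy (\<lambda>m. T (xs (r m)) k)" by (simp add: LIMSEQ_imp_Cauchy o_def)
  thus "\<exists>r. strict_mono r \<and> l2_Cauchy (\<lambda>m j. if j = k then T (xs (r m)) k else 0)"
    using r l2_Cauchy_single by blast
qed

lemma compact_op_trunc:
  assumes T: "bounded_op T" shows "compact_op (\<lambda>x. trunc_vec n (T x))"
proof (induction n)
  case 0
  thus ?case using compact_op_zero by (simp add: trunc_vec_def)
next
  case (Suc n)
  have "(\<lambda>x. trunc_vec (Suc n) (T x)) = op_add (\<lambda>x. trunc_vec n (T x)) (\<lambda>x j. if j = n then T x n else 0)"
    by (intro ext) (auto simp: trunc_vec_def op_add_def)
  thus ?case using Suc compact_op_coord[OF T] by (simp add: compact_op_add)
qed

section \<open>Anti-Hermitian and diagonal operators\<close>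

lemma antiherm_opD: "antiherm_op T \<Longrightarrow> l2 x \<Longrightarrow> l2 y \<Longrightarrow> l2inner (T x) y = - l2inner x (T y)"
  unfolding antiherm_op_def by blast

lemma antiherm_op_add:
  assumes S: "bounded_op S" "antiherm_op S" and T: "bounded_op T" "antiherm_op T"
  shows "antiherm_op (op_add S T)"
  unfolding antiherm_op_def
proof (intro allI impI)
  fix x y assume x: "l2 x" and y: "l2 y"
  have "l2inner (op_add S T x) y = l2inner (S x) y + l2inner (T x) y"
    unfolding op_add_def by (rule l2inner_add_left[OF bounded_op_l2[OF S(1) x] bounded_op_l2[OF T(1) x] y])
  also have "\<dots> = - l2inner x (S y) - l2inner x (T y)"
    using antiherm_opD[OF S(2) x y] antiherm_opD[OF T(2) x y] by simp
  also have "\<dots> = - l2inner x (op_add S T y)"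
    unfolding op_add_def using l2inner_add_right[OF x bounded_op_l2[OF S(1) y] bounded_op_l2[OF T(1) y]]
    by simp
  finally show "l2inner (op_add S T x) y = - l2inner x (op_add S T y)" .
qed

lemma antiherm_op_neg:
  assumes S: "bounded_op S" "antiherm_op S" shows "antiherm_op (\<lambda>x n. - S x n)"
  unfolding antiherm_op_def
proof (intro allI impI)
  fix x y assume x: "l2 x" and y: "l2 y"
  have "l2inner (\<lambda>n. - S x n) y = - l2inner (S x) y"
    using l2inner_scale_left[OF bounded_op_l2[OF S(1) x] y, of "-1"] by simp
  also have "\<dots> = - l2inner x (\<lambda>n. - S y n)"
    using antiherm_opD[OF S(2) x y] l2inner_scale_right[OF x bounded_op_l2[OF S(1) y], of "-1"] by simp
  finally show "l2inner (\<lambda>n. - S x n) y = - l2inner x (\<lambda>n. - S y n)" .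
qed

lemma antiherm_op_sub:
  assumes "bounded_op S" "antiherm_op S" "bounded_op T" "antiherm_op T"
  shows "antiherm_op (op_sub S T)"
  unfolding op_sub_eq_op_add_neg using assms by (intro antiherm_op_add bounded_op_neg antiherm_op_neg)

lemma antiherm_op_scalar: "Re c = 0 \<Longrightarrow> antiherm_op (op_scalar c)"
  unfolding antiherm_op_def op_scalar_def
  by (simp add: l2inner_scale_left l2inner_scale_right complex_eq_iff)

lemma diag_op_bounded: "diag_op D \<Longrightarrow> bounded_op D"
  unfolding diag_op_def by blast

lemma diag_op_basis:
  assumes "diag_op D" shows "D (basis_vec i) = (\<lambda>n. D (basis_vec i) i * basis_vec i n)"
proof -
  obtain c where c: "D (basis_vec i) = (\<lambda>n. c * basis_vec i n)" using assms unfolding diag_op_def by blast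
  hence "D (basis_vec i) i = c" by (simp add: basis_vec_def)
  thus ?thesis using c by (simp add: basis_vec_def)
qed

lemma diag_opI:
  assumes "bounded_op D" "\<And>i. D (basis_vec i) = (\<lambda>n. c i * basis_vec i n)" shows "diag_op D"
  unfolding diag_op_def using assms by blast

lemma diag_op_add:
  assumes "diag_op S" "diag_op T" shows "diag_op (op_add S T)"
proof (rule diag_opI)
  show "bounded_op (op_add S T)" using assms by (intro bounded_op_op_add diag_op_bounded)
  show "op_add S T (basis_vec i) = (\<lambda>n. (S (basis_vec i) i + T (basis_vec i) i) * basis_vec i n)" for i
    unfolding op_add_def
    by (subst diag_op_basis[OF assms(1)], subst diag_op_basis[OF assms(2)]) (simp add: algebra_simps)
qed

lemma diag_op_neg:
  assumes "diag_op S" shows "diag_op (\<lambda>x n. - S x n)"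
proof (rule diag_opI)
  show "bounded_op (\<lambda>x n. - S x n)" using assms by (intro bounded_op_neg diag_op_bounded)
  show "(\<lambda>n. - S (basis_vec i) n) = (\<lambda>n. (- S (basis_vec i) i) * basis_vec i n)" for i
    by (subst diag_op_basis[OF assms]) simp
qed

lemma diag_op_sub: "diag_op S \<Longrightarrow> diag_op T \<Longrightarrow> diag_op (op_sub S T)"
  unfolding op_sub_eq_op_add_neg by (intro diag_op_add diag_op_neg)

lemma diag_op_scalar: "diag_op (op_scalar c)"
  by (rule diag_opI[OF bounded_op_scalar, of _ "\<lambda>i. c"]) (simp add: op_scalar_def)

lemma diag_op_apply:
  assumes D: "diag_op D" and adj: "\<And>x y. l2 x \<Longrightarrow> l2 y \<Longrightarrow> l2inner (D x) y = s * l2inner x (D y)"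
    and v: "l2 v"
  shows "D v k = D (basis_vec k) k * v k"
proof -
  let ?\<delta> = "D (basis_vec k) k"
  have e: "l2 (basis_vec k)" using basis_vec_l2 by blast
  have adj_e: "l2inner x (D (basis_vec k)) = cnj ?\<delta> * x k" if "l2 x" for x
    by (subst diag_op_basis[OF D]) (simp add: l2inner_scale_right[OF that e] l2inner_basis_right)
  have "?\<delta> = s * cnj ?\<delta>"
    using adj[OF e e] adj_e[OF e] by (simp add: l2inner_basis_right l2inner_basis_left)
  moreover have "D v k = s * (cnj ?\<delta> * v k)"
    using adj[OF v e] adj_e[OF v] by (simp add: l2inner_basis_right)
  ultimately show ?thesis by simp
qed

lemma diag_antiherm_apply: "diag_op D \<Longrightarrow> antiherm_op D \<Longrightarrow> l2 v \<Longrightarrow> D v k = D (basis_vec k) k * v k"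
  by (rule diag_op_apply[where s="-1"]) (simp_all add: antiherm_opD)

lemma diag_selfadj_apply: "diag_op D \<Longrightarrow> selfadj_op D \<Longrightarrow> l2 v \<Longrightarrow> D v k = D (basis_vec k) k * v k"
  by (rule diag_op_apply[where s=1]) (simp_all add: selfadj_op_def)

section \<open>Tails of compact operators\<close>

lemma compact_op_tail_diagonal:
  fixes xs :: "nat \<Rightarrow> nat \<Rightarrow> complex"
  assumes K: "compact_op K" and xs: "\<And>k. l2 (xs k) \<and> l2norm (xs k) \<le> 1" and e: "\<epsilon> > 0"
  obtains p where "l2norm (tail_vec p (K (xs p))) < \<epsilon>"
proof -
  have Kb: "bounded_op K" using K by (rule compact_op_bounded)
  obtain r where r: "strict_mono r" and cau: "l2_Cauchy (\<lambda>k. K (xs (r k)))"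
    using K xs by (rule compact_opE)
  obtain N where N: "\<And>m n. m \<ge> N \<Longrightarrow> n \<ge> N \<Longrightarrow> l2norm (\<lambda>i. K (xs (r m)) i - K (xs (r n)) i) < \<epsilon>/2"
    using l2_CauchyD[OF cau, of "\<epsilon>/2"] e by auto
  define v where "v = K (xs (r N))"
  have v: "l2 v" unfolding v_def using bounded_op_l2[OF Kb] xs by blast
  obtain n0 where n0: "\<And>n. n \<ge> n0 \<Longrightarrow> l2norm (tail_vec n v) < \<epsilon>/2"
    using tail_vec_small[OF v, of "\<epsilon>/2"] e by auto
  define m where "m = max N n0"
  define p where "p = r m"
  have "p \<ge> m" unfolding p_def by (rule seq_suble[OF r])
  define w where "w = K (xs p)"
  have w: "l2 w" unfolding w_def using bounded_op_l2[OF Kb] xs by blast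
  have wv: "l2 (\<lambda>i. w i - v i)" using l2_diff[OF w v] by blast
  have "tail_vec p w = (\<lambda>i. tail_vec p v i + tail_vec p (\<lambda>i. w i - v i) i)"
    by (auto simp: tail_vec_def)
  hence "l2norm (tail_vec p w) \<le> l2norm (tail_vec p v) + l2norm (tail_vec p (\<lambda>i. w i - v i))"
    using l2_add tail_vec_l2[OF v] tail_vec_l2[OF wv] by metis
  also have "l2norm (tail_vec p (\<lambda>i. w i - v i)) \<le> l2norm (\<lambda>i. w i - v i)"
    using tail_vec_l2[OF wv] by blast
  also have "l2norm (\<lambda>i. w i - v i) < \<epsilon>/2"
    unfolding w_def v_def p_def using N[of m N] by (simp add: m_def)
  also have "l2norm (tail_vec p v) < \<epsilon>/2" using n0 \<open>p \<ge> m\<close> by (simp add: m_def)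
  finally show ?thesis using that unfolding w_def by simp
qed

lemma compact_op_tail_uniform:
  assumes K: "compact_op K" and e: "\<epsilon> > 0"
  obtains n where "\<And>u. l2 u \<Longrightarrow> l2norm (tail_vec n (K u)) \<le> \<epsilon> * l2norm u"
proof (rule ccontr)
  have Kb: "bounded_op K" using K by (rule compact_op_bounded)
  assume "\<not> thesis"
  hence "\<forall>n. \<exists>u. l2 u \<and> l2norm (tail_vec n (K u)) > \<epsilon> * l2norm u" using that by (meson not_le)
  then obtain u where u: "\<And>n. l2 (u n)" and big: "\<And>n. l2norm (tail_vec n (K (u n))) > \<epsilon> * l2norm (u n)"
    by metis
  have pos: "l2norm (u n) > 0" for n
  proof (rule ccontr)
    assume "\<not> l2norm (u n) > 0"
    hence "u n = (\<lambda>k. 0)" using l2norm_eq_0D l2norm_nonneg u by (metis order.antisym not_less)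
    thus False using big[of n] by (simp add: bounded_op_zero[OF Kb] tail_vec_def l2_zero)
  qed
  define x where "x n = (\<lambda>k. complex_of_real (1 / l2norm (u n)) * u n k)" for n
  have x: "l2 (x n) \<and> l2norm (x n) \<le> 1" for n
    using l2_scale[OF u[of n], of "complex_of_real (1 / l2norm (u n))"] pos[of n] by (simp add: x_def norm_divide)
  have "l2norm (tail_vec n (K (x n))) = l2norm (tail_vec n (K (u n))) / l2norm (u n)" for n
  proof -
    have "tail_vec n (K (x n)) = (\<lambda>k. complex_of_real (1 / l2norm (u n)) * tail_vec n (K (u n)) k)"
      unfolding x_def bounded_op_scale[OF Kb u] by (auto simp: tail_vec_def)
    thus ?thesis
      using l2_scale[OF tail_vec_l2[OF bounded_op_l2[OF Kb u[of n]], of n, THEN conjunct1],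
          of "complex_of_real (1 / l2norm (u n))"] pos[of n]
      by (simp add: norm_divide)
  qed
  hence "l2norm (tail_vec n (K (x n))) > \<epsilon>" for n
    using big[of n] pos[of n] by (simp add: pos_less_divide_eq mult.commute)
  moreover obtain p where "l2norm (tail_vec p (K (x p))) < \<epsilon>"
    using compact_op_tail_diagonal[OF K x e] .
  ultimately show False by (meson not_less_iff_gr_or_eq)
qed

lemma antiherm_op_tail_right:
  assumes Kb: "bounded_op K" and Ka: "antiherm_op K" and e: "\<epsilon> \<ge> 0"
    and h: "\<And>u. l2 u \<Longrightarrow> l2norm (tail_vec n (K u)) \<le> \<epsilon> * l2norm u" and x: "l2 x"
  shows "l2norm (K (tail_vec n x)) \<le> \<epsilon> * l2norm x"
proof -
  have qx: "l2 (tail_vec n x)" using tail_vec_l2[OF x] by blast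
  define w where "w = K (tail_vec n x)"
  have w: "l2 w" unfolding w_def using bounded_op_l2[OF Kb qx] .
  have Kw: "l2 (K w)" using bounded_op_l2[OF Kb w] .
  have "complex_of_real ((l2norm w)^2) = l2inner w w" using l2inner_self[OF w] by simp
  also have "\<dots> = - l2inner (tail_vec n x) (K w)" unfolding w_def by (rule antiherm_opD[OF Ka qx w[unfolded w_def]])
  also have "\<dots> = - l2inner x (tail_vec n (K w))" by (simp add: l2inner_tail_vec)
  finally have "(l2norm w)^2 = cmod (l2inner x (tail_vec n (K w)))"
    by (metis norm_minus_cancel norm_of_real abs_power2 power2_abs)
  also have "\<dots> \<le> l2norm x * l2norm (tail_vec n (K w))"
    using l2inner_Cauchy_Schwarz[OF x] tail_vec_l2[OF Kw] by blast
  also have "\<dots> \<le> l2norm x * (\<epsilon> * l2norm w)"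
    using h[OF w] l2norm_nonneg[OF x] by (simp add: mult_left_mono)
  finally have "l2norm w * l2norm w \<le> l2norm w * (\<epsilon> * l2norm x)" by (simp add: ac_simps power2_eq_square)
  thus ?thesis
    using l2norm_nonneg[OF w] l2norm_nonneg[OF x] e unfolding w_def
    by (metis mult_le_cancel_left_pos order_le_less zero_le_mult_iff)
qed

section \<open>Compressing a diagonal operator\<close>

lemma diag_antiherm_trunc_commute:
  assumes "diag_op D" "antiherm_op D" "l2 y" shows "D (trunc_vec n y) = trunc_vec n (D y)"
  using diag_antiherm_apply[OF assms(1,2)] trunc_vec_l2[OF assms(3)] assms(3)
  by (auto simp: trunc_vec_def)

lemma diag_trunc_in_DKah:
  assumes D: "diag_op D" "antiherm_op D" shows "(\<lambda>x. trunc_vec n (D x)) \<in> DKah"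
proof -
  let ?d = "\<lambda>x. trunc_vec n (D x)"
  have Db: "bounded_op D" using D(1) by (rule diag_op_bounded)
  have "diag_op ?d"
  proof (rule diag_opI[OF bounded_op_trunc[OF Db], where c="\<lambda>i. if i < n then D (basis_vec i) i else 0"])
    show "?d (basis_vec i) = (\<lambda>m. (if i < n then D (basis_vec i) i else 0) * basis_vec i m)" for i
      by (subst diag_op_basis[OF D(1)]) (auto simp: trunc_vec_def basis_vec_def)
  qed
  moreover have "antiherm_op ?d" unfolding antiherm_op_def
  proof (intro allI impI)
    fix x y assume x: "l2 x" and y: "l2 y"
    have "l2inner (?d x) y = l2inner (D x) (trunc_vec n y)" by (rule l2inner_trunc_vec)
    also have "\<dots> = - l2inner x (D (trunc_vec n y))"
      using antiherm_opD[OF D(2) x] trunc_vec_l2[OF y] by blast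
    finally show "l2inner (?d x) y = - l2inner x (?d y)"
      by (simp add: diag_antiherm_trunc_commute[OF D y])
  qed
  ultimately show ?thesis unfolding DKah_def using compact_op_trunc[OF Db] by blast
qed

lemma l2norm_add3_le:
  assumes "l2 a" "l2 b" "l2 c"
  shows "l2norm (\<lambda>k. (a k + b k) + c k) \<le> l2norm a + l2norm b + l2norm c"
  using l2_add[OF l2_add[OF assms(1,2), THEN conjunct1] assms(3)] l2_add[OF assms(1,2)] by linarith

lemma compression_decomp:
  assumes K: "bounded_op K" and D: "diag_op D" "antiherm_op D" and x: "l2 x"
  shows "op_add K (\<lambda>x. trunc_vec n (D x)) x
    = (\<lambda>k. (trunc_vec n (op_add K D (trunc_vec n x)) k + trunc_vec n (K (tail_vec n x)) k)
          + tail_vec n (K x) k)"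
proof -
  have Kx: "K x = (\<lambda>k. K (trunc_vec n x) k + K (tail_vec n x) k)"
    using trunc_vec_l2[OF x, of n] tail_vec_l2[OF x, of n]
    by (subst trunc_tail_split[of x n]) (simp add: bounded_op_add[OF K])
  show ?thesis
    unfolding op_add_def diag_antiherm_trunc_commute[OF D x]
    by (subst (1 2) Kx) (simp add: fun_eq_iff trunc_vec_def tail_vec_def)
qed

lemma diag_compact_approx:
  assumes K: "compact_op K" "antiherm_op K" and D: "diag_op D" "antiherm_op D" and e: "\<epsilon> > 0"
  obtains d where "d \<in> DKah" "op_norm (op_add K d) \<le> op_norm (op_add K D) + \<epsilon>"
proof -
  have Kb: "bounded_op K" using K(1) by (rule compact_op_bounded)
  have Tb: "bounded_op (op_add K D)" by (rule bounded_op_op_add[OF Kb diag_op_bounded[OF D(1)]])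
  have "\<epsilon>/2 > 0" using e by simp
  then obtain n where tail_K: "\<And>u. l2 u \<Longrightarrow> l2norm (tail_vec n (K u)) \<le> \<epsilon>/2 * l2norm u"
    using compact_op_tail_uniform[OF K(1)] by blast
  have K_tail: "\<And>x. l2 x \<Longrightarrow> l2norm (K (tail_vec n x)) \<le> \<epsilon>/2 * l2norm x"
    by (rule antiherm_op_tail_right[OF Kb K(2) _ tail_K]) (use e in auto)
  have "op_norm (op_add K (\<lambda>x. trunc_vec n (D x))) \<le> op_norm (op_add K D) + \<epsilon>"
  proof (rule op_norm_le)
    fix x assume x: "l2 x" and x1: "l2norm x \<le> 1"
    have px: "l2 (trunc_vec n x)" "l2norm (trunc_vec n x) \<le> 1"
      using trunc_vec_l2[OF x, of n] x1 by auto
    have qx: "l2 (tail_vec n x)" using tail_vec_l2[OF x] by blast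
    have "l2norm (op_add K (\<lambda>x. trunc_vec n (D x)) x) \<le> l2norm (trunc_vec n (op_add K D (trunc_vec n x)))
        + l2norm (trunc_vec n (K (tail_vec n x))) + l2norm (tail_vec n (K x))"
      unfolding compression_decomp[OF Kb D x]
      using trunc_vec_l2 tail_vec_l2 bounded_op_l2[OF Tb px(1)] bounded_op_l2[OF Kb qx]
        bounded_op_l2[OF Kb x] by (blast intro: l2norm_add3_le)
    also have "l2norm (trunc_vec n (op_add K D (trunc_vec n x))) \<le> op_norm (op_add K D)"
      using trunc_vec_l2[OF bounded_op_l2[OF Tb px(1)], of n] l2norm_le_op_norm[OF Tb px] by linarith
    also have "l2norm (trunc_vec n (K (tail_vec n x))) \<le> \<epsilon>/2"
      using trunc_vec_l2[OF bounded_op_l2[OF Kb qx], of n] K_tail[OF x]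
        mult_left_mono[OF x1, of "\<epsilon>/2"] e by linarith
    also have "l2norm (tail_vec n (K x)) \<le> \<epsilon>/2"
      using tail_K[OF x] mult_left_mono[OF x1, of "\<epsilon>/2"] e by linarith
    finally show "l2norm (op_add K (\<lambda>x. trunc_vec n (D x)) x) \<le> op_norm (op_add K D) + \<epsilon>" by simp
  qed
  thus ?thesis using that diag_trunc_in_DKah[OF D] by blast
qed

lemma Inf_eq_if_nested_approx:
  fixes A B C :: "real set"
  assumes CB: "C \<subseteq> B" and BA: "B \<subseteq> A" and "C \<noteq> {}" and A: "bdd_below A"
    and approx: "\<And>y \<epsilon>. y \<in> A \<Longrightarrow> \<epsilon> > 0 \<Longrightarrow> \<exists>z\<in>C. z \<le> y + \<epsilon>"
  shows "Inf A = Inf B \<and> Inf B = Inf C"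
proof -
  have "B \<noteq> {}" "A \<noteq> {}" using CB BA \<open>C \<noteq> {}\<close> by auto
  have B: "bdd_below B" by (rule bdd_below_mono[OF A BA])
  have C: "bdd_below C" by (rule bdd_below_mono[OF B CB])
  have "Inf A \<le> Inf B" by (rule cInf_superset_mono[OF \<open>B \<noteq> {}\<close> A BA])
  moreover have "Inf B \<le> Inf C" by (rule cInf_superset_mono[OF \<open>C \<noteq> {}\<close> B CB])
  moreover have "Inf C \<le> Inf A"
  proof (rule cInf_greatest[OF \<open>A \<noteq> {}\<close>])
    fix y assume "y \<in> A"
    show "Inf C \<le> y"
    proof (rule field_le_epsilon)
      fix \<epsilon> :: real assume "\<epsilon> > 0"
      then obtain z where "z \<in> C" "z \<le> y + \<epsilon>" using approx \<open>y \<in> A\<close> by blast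
      thus "Inf C \<le> y + \<epsilon>" using cInf_lower[OF _ C] by fastforce
    qed
  qed
  ultimately show ?thesis by linarith
qed

lemma op_scalar_add_in_DBah:
  assumes "d \<in> DKah" "Re c = 0" shows "op_add (op_scalar c) d \<in> DBah"
proof -
  have "diag_op d" "antiherm_op d" using assms(1) unfolding DKah_def by auto
  thus ?thesis unfolding DBah_def
    by (simp add: diag_op_add diag_op_scalar antiherm_op_add bounded_op_scalar diag_op_bounded
        antiherm_op_scalar assms(2))
qed

lemma op_scalar_0_in_DKah: "op_scalar 0 \<in> DKah"
  unfolding DKah_def using diag_op_scalar[of 0] antiherm_op_scalar[of 0] compact_op_zero
  by (simp add: op_scalar_def)

lemma Inf_diag_quotients_eq:
  assumes K: "K \<in> Kah"
  shows "Inf ((\<lambda>D. op_norm (op_add K D)) ` DBah)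
        = Inf ((\<lambda>(d, \<theta>::real). op_norm
              (op_add (op_add (op_add K (op_scalar (\<i> * complex_of_real t))) d)
                      (op_scalar (\<i> * complex_of_real \<theta>)))) ` (DKah \<times> UNIV))
    \<and> Inf ((\<lambda>(d, \<theta>::real). op_norm
              (op_add (op_add (op_add K (op_scalar (\<i> * complex_of_real t))) d)
                      (op_scalar (\<i> * complex_of_real \<theta>)))) ` (DKah \<times> UNIV))
        = Inf ((\<lambda>d. op_norm (op_add K d)) ` DKah)"
    (is "Inf ?A = Inf ?B \<and> Inf ?B = Inf ?C")
proof (rule Inf_eq_if_nested_approx)
  have Kb: "bounded_op K" and Kc: "compact_op K" "antiherm_op K"
    using K unfolding Kah_def by (auto intro: compact_op_bounded)
  have shift: "op_add (op_add (op_add K (op_scalar (\<i> * complex_of_real t))) d)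
      (op_scalar (\<i> * complex_of_real \<theta>))
    = op_add K (op_add (op_scalar (\<i> * complex_of_real (t + \<theta>))) d)" for d \<theta>
    by (intro ext) (simp add: op_add_def op_scalar_def algebra_simps)
  have no_shift: "op_add (op_scalar (\<i> * complex_of_real (t + - t))) d = d" for d
    by (intro ext) (simp add: op_add_def op_scalar_def)
  show "?C \<subseteq> ?B"
  proof
    fix y assume "y \<in> ?C"
    then obtain d where "d \<in> DKah" "y = op_norm (op_add K d)" by blast
    thus "y \<in> ?B" unfolding shift by (auto simp only: no_shift intro!: image_eqI[where x="(d, - t)"])
  qed
  show "?B \<subseteq> ?A"
  proof
    fix y assume "y \<in> ?B"
    then obtain d \<theta> where d: "d \<in> DKah"
      and y: "y = op_norm (op_add K (op_add (op_scalar (\<i> * complex_of_real (t + \<theta>))) d))"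
      unfolding shift by (auto simp del: of_real_add)
    have "op_add (op_scalar (\<i> * complex_of_real (t + \<theta>))) d \<in> DBah"
      by (rule op_scalar_add_in_DBah[OF d]) simp
    thus "y \<in> ?A" using y by blast
  qed
  show "?C \<noteq> {}" using op_scalar_0_in_DKah by blast
  show "bdd_below ?A"
  proof (rule bdd_belowI)
    fix y assume "y \<in> ?A"
    then obtain D where "D \<in> DBah" "y = op_norm (op_add K D)" by blast
    thus "0 \<le> y" unfolding DBah_def by (auto intro: op_norm_nonneg bounded_op_op_add[OF Kb] diag_op_bounded)
  qed
  show "\<exists>z\<in>?C. z \<le> y + \<epsilon>" if "y \<in> ?A" "\<epsilon> > 0" for y \<epsilon>
  proof -
    obtain D where "D \<in> DBah" "y = op_norm (op_add K D)" using \<open>y \<in> ?A\<close> by blast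
    then obtain d where "d \<in> DKah" "op_norm (op_add K d) \<le> y + \<epsilon>"
      using diag_compact_approx[OF Kc _ _ \<open>\<epsilon> > 0\<close>] unfolding DBah_def by blast
    thus ?thesis by blast
  qed
qed

section \<open>Anti-Hermitian elements of \<open>K + C\<close>\<close>

text \<open>The diagonal entries of \<open>X\<close> are imaginary, so those of \<open>K'\<close> have real part \<open>-Re c\<close>;
  but the diagonal entries of a compact operator cannot stay away from \<open>0\<close>.\<close>

lemma antiherm_scalar_part_imaginary:
  assumes Xa: "antiherm_op X" and K: "compact_op K'" and eq: "op_eq X (op_add K' (op_scalar c))"
  shows "Re c = 0"
proof (rule ccontr)
  assume "Re c \<noteq> 0"
  have Kb: "bounded_op K'" using K by (rule compact_op_bounded)
  have e: "\<And>n. l2 (basis_vec n) \<and> l2norm (basis_vec n) \<le> 1" using basis_vec_l2 by simp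
  have lower: "\<bar>Re c\<bar> \<le> cmod (K' (basis_vec n) n)" for n
  proof -
    have E: "X (basis_vec n) n = - cnj (X (basis_vec n) n)"
      using antiherm_opD[OF Xa, of "basis_vec n" "basis_vec n"] e
      by (simp add: l2inner_basis_right l2inner_basis_left)
    have "Re (X (basis_vec n) n) = Re (- cnj (X (basis_vec n) n))" using E by (rule arg_cong)
    hence "Re (X (basis_vec n) n) = 0" by simp
    moreover have "X (basis_vec n) n = K' (basis_vec n) n + c"
      using op_eqD[OF eq] e by (simp add: op_add_def op_scalar_def basis_vec_def)
    ultimately have "Re (K' (basis_vec n) n) = - Re c" by simp
    thus ?thesis using abs_Re_le_cmod[of "K' (basis_vec n) n"] by simp
  qed
  have "\<bar>Re c\<bar> > 0" using \<open>Re c \<noteq> 0\<close> by simp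
  then obtain p where "l2norm (tail_vec p (K' (basis_vec p))) < \<bar>Re c\<bar>"
    using compact_op_tail_diagonal[of K' basis_vec "\<bar>Re c\<bar>", OF K e] by blast
  moreover have "l2 (tail_vec p (K' (basis_vec p)))"
    using tail_vec_l2 bounded_op_l2[OF Kb] e by blast
  hence "cmod (tail_vec p (K' (basis_vec p)) p) \<le> l2norm (tail_vec p (K' (basis_vec p)))"
    by (rule cmod_le_l2norm)
  ultimately show False using lower[of p] by (simp add: tail_vec_def)
qed

lemma antiherm_compact_part:
  assumes Xb: "bounded_op X" and Xa: "antiherm_op X"
    and eq: "op_eq X (op_add K' (op_scalar c))" and re: "Re c = 0"
  shows "antiherm_op K'"
  unfolding antiherm_op_def
proof (intro allI impI)
  fix x y assume x: "l2 x" and y: "l2 y"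
  have Kx: "K' x = (\<lambda>n. X x n - c * x n)" and Ky: "K' y = (\<lambda>n. X y n - c * y n)"
    using op_eqD[OF eq] x y by (auto simp: op_add_def op_scalar_def)
  have cx: "l2 (\<lambda>n. c * x n)" and cy: "l2 (\<lambda>n. c * y n)" using l2_scale x y by blast+
  have "l2inner (K' x) y = l2inner (X x) y - c * l2inner x y"
    unfolding Kx by (simp add: l2inner_diff_left[OF bounded_op_l2[OF Xb x] cx y] l2inner_scale_left[OF x y])
  also have "\<dots> = - l2inner x (X y) - c * l2inner x y" using antiherm_opD[OF Xa x y] by simp
  also have "\<dots> = - l2inner x (K' y)"
    using re unfolding Ky
    by (simp add: l2inner_diff_right[OF x bounded_op_l2[OF Xb y] cy] l2inner_scale_right[OF x y]
        complex_eq_iff)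
  finally show "l2inner (K' x) y = - l2inner x (K' y)" .
qed

lemma KC_op_sub:
  assumes "KC_op X" "KC_op Y" shows "KC_op (op_sub X Y)"
proof -
  obtain K1 c1 where 1: "compact_op K1" "op_eq X (op_add K1 (op_scalar c1))"
    using assms(1) unfolding KC_op_def by blast
  obtain K2 c2 where 2: "compact_op K2" "op_eq Y (op_add K2 (op_scalar c2))"
    using assms(2) unfolding KC_op_def by blast
  have "op_eq (op_sub X Y) (op_add (op_sub K1 K2) (op_scalar (c1 - c2)))"
    using op_eqD[OF 1(2)] op_eqD[OF 2(2)]
    by (intro op_eqI) (simp add: op_sub_def op_add_def op_scalar_def algebra_simps)
  thus ?thesis unfolding KC_op_def using compact_op_sub[OF 1(1) 2(1)] by blast
qed

section \<open>The Finsler norm as a quotient norm\<close>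

lemma diag_antiherm_commute_selfadj:
  assumes bd: "diag_op b" and bs: "selfadj_op b" and Dd: "diag_op D" and Da: "antiherm_op D" and x: "l2 x"
  shows "D (b x) = b (D x)"
proof -
  have bx: "l2 (b x)" and Dx: "l2 (D x)" using bounded_op_l2 diag_op_bounded bd Dd x by blast+
  show ?thesis
    by (simp add: fun_eq_iff diag_antiherm_apply[OF Dd Da bx] diag_selfadj_apply[OF bd bs Dx]
        diag_antiherm_apply[OF Dd Da x] diag_selfadj_apply[OF bd bs x])
qed

text \<open>Comparing the \<open>k\<close>-th coordinates of \<open>(X - Y) b e\<^sub>i = b (X - Y) e\<^sub>i\<close> gives
  \<open>(b\<^sub>i - b\<^sub>k) (X - Y)\<^sub>k\<^sub>i = 0\<close>, and the \<open>b\<^sub>i\<close> are pairwise distinct.\<close>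

lemma commutant_diag:
  assumes bd: "diag_op b" and bs: "selfadj_op b"
    and dist: "\<forall>i j. i \<noteq> j \<longrightarrow> b (basis_vec i) i \<noteq> b (basis_vec j) j"
    and X: "bounded_op X" and Y: "bounded_op Y" and com: "op_eq (op_comm Y b) (op_comm X b)"
  shows "diag_op (op_sub X Y)"
proof (rule diag_opI[OF bounded_op_op_sub[OF X Y], where c="\<lambda>i. op_sub X Y (basis_vec i) i"])
  fix i
  define \<beta> where "\<beta> k = b (basis_vec k) k" for k
  have e: "l2 (basis_vec i)" using basis_vec_l2 by blast
  have b_apply: "b v k = \<beta> k * v k" if "l2 v" for v k
    unfolding \<beta>_def by (rule diag_selfadj_apply[OF bd bs that])
  have b_e: "b (basis_vec i) = (\<lambda>n. \<beta> i * basis_vec i n)"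
    using diag_op_basis[OF bd, of i] by (simp add: \<beta>_def)
  have zero: "op_sub X Y (basis_vec i) k = 0" if "k \<noteq> i" for k
  proof -
    have "Y (b (basis_vec i)) k - b (Y (basis_vec i)) k = X (b (basis_vec i)) k - b (X (basis_vec i)) k"
      using op_eqD[OF com e] by (simp add: op_comm_def op_sub_def fun_eq_iff)
    hence "(\<beta> i - \<beta> k) * (X (basis_vec i) k - Y (basis_vec i) k) = 0"
      unfolding b_e bounded_op_scale[OF X e] bounded_op_scale[OF Y e]
        b_apply[OF bounded_op_l2[OF X e]] b_apply[OF bounded_op_l2[OF Y e]]
      by (simp add: algebra_simps)
    moreover have "\<beta> i \<noteq> \<beta> k" using dist that unfolding \<beta>_def by auto
    ultimately show ?thesis by (simp add: op_sub_def)
  qed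
  show "op_sub X Y (basis_vec i) = (\<lambda>n. op_sub X Y (basis_vec i) i * basis_vec i n)"
    using zero by (auto simp: basis_vec_def)
qed

lemma finsler_set_eq:
  assumes bd: "diag_op b" and bs: "selfadj_op b"
    and dist: "\<forall>i j. i \<noteq> j \<longrightarrow> b (basis_vec i) i \<noteq> b (basis_vec j) j"
    and X: "X \<in> KCah"
  shows "{op_norm Y | Y. Y \<in> KCah \<and> op_eq (op_comm Y b) (op_comm X b)} = (\<lambda>D. op_norm (op_sub X D)) ` DKCah"
proof -
  have bb: "bounded_op b" using bd by (rule diag_op_bounded)
  have Xp: "bounded_op X" "KC_op X" "antiherm_op X" using X unfolding KCah_def by auto
  show ?thesis
  proof (intro equalityI subsetI)
    fix y assume "y \<in> {op_norm Y | Y. Y \<in> KCah \<and> op_eq (op_comm Y b) (op_comm X b)}"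
    then obtain Y where Y: "Y \<in> KCah" and com: "op_eq (op_comm Y b) (op_comm X b)" and y: "y = op_norm Y"
      by blast
    have Yp: "bounded_op Y" "KC_op Y" "antiherm_op Y" using Y unfolding KCah_def by auto
    have "op_sub X Y \<in> DKCah"
      unfolding DKCah_def using commutant_diag[OF bd bs dist Xp(1) Yp(1) com] KC_op_sub[OF Xp(2) Yp(2)]
        antiherm_op_sub[OF Xp(1) Xp(3) Yp(1) Yp(3)] by blast
    moreover have "op_sub X (op_sub X Y) = Y" by (simp add: op_sub_def)
    ultimately show "y \<in> (\<lambda>D. op_norm (op_sub X D)) ` DKCah" using y by (metis image_eqI)
  next
    fix y assume "y \<in> (\<lambda>D. op_norm (op_sub X D)) ` DKCah"
    then obtain D where D: "D \<in> DKCah" and y: "y = op_norm (op_sub X D)" by blast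
    have Dp: "diag_op D" "KC_op D" "antiherm_op D" using D unfolding DKCah_def by auto
    have Db: "bounded_op D" using Dp(1) by (rule diag_op_bounded)
    have "op_sub X D \<in> KCah" unfolding KCah_def
      using bounded_op_op_sub[OF Xp(1) Db] KC_op_sub[OF Xp(2) Dp(2)] antiherm_op_sub[OF Xp(1) Xp(3) Db Dp(3)]
      by blast
    moreover have "op_eq (op_comm (op_sub X D) b) (op_comm X b)"
    proof (rule op_eqI)
      fix x assume x: "l2 x"
      have "b (op_sub X D x) = (\<lambda>n. b (X x) n - b (D x) n)"
        unfolding op_sub_def by (rule bounded_op_diff[OF bb bounded_op_l2[OF Xp(1) x] bounded_op_l2[OF Db x]])
      thus "op_comm (op_sub X D) b x = op_comm X b x"
        using diag_antiherm_commute_selfadj[OF bd bs Dp(1) Dp(3) x] by (simp add: op_comm_def op_sub_def)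
    qed
    ultimately show "y \<in> {op_norm Y | Y. Y \<in> KCah \<and> op_eq (op_comm Y b) (op_comm X b)}"
      using y by blast
  qed
qed

lemma image_eq_if_values_match:
  assumes "\<And>x. x \<in> A \<Longrightarrow> \<exists>y\<in>B. f x = g y" and "\<And>y. y \<in> B \<Longrightarrow> \<exists>x\<in>A. g y = f x"
  shows "f ` A = g ` B"
  using assms by (auto simp: image_iff)

lemma imag_if_Re_zero: "Re c = 0 \<Longrightarrow> c = \<i> * complex_of_real (Im c)"
  by (simp add: complex_eq_iff)

lemma DKah_neg: "d \<in> DKah \<Longrightarrow> (\<lambda>x n. - d x n) \<in> DKah"
  unfolding DKah_def
  by (auto intro: diag_op_neg compact_op_neg antiherm_op_neg diag_op_bounded)

lemma DKCah_decomp: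
  assumes "D \<in> DKCah"
  obtains d \<theta> where "d \<in> DKah" "op_eq D (op_add d (op_scalar (\<i> * complex_of_real \<theta>)))"
proof -
  have D: "diag_op D" "KC_op D" "antiherm_op D" using assms unfolding DKCah_def by auto
  obtain d c where d: "compact_op d" and eq: "op_eq D (op_add d (op_scalar c))"
    using D(2) unfolding KC_op_def by blast
  have Db: "bounded_op D" using D(1) by (rule diag_op_bounded)
  have re: "Re c = 0" by (rule antiherm_scalar_part_imaginary[OF D(3) d eq])
  have "antiherm_op d" by (rule antiherm_compact_part[OF Db D(3) eq re])
  moreover have "diag_op d"
  proof (rule diag_opI[OF compact_op_bounded[OF d], where c="\<lambda>i. D (basis_vec i) i - c"])
    fix i
    have "d (basis_vec i) = (\<lambda>n. D (basis_vec i) n - c * basis_vec i n)"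
      using op_eqD[OF eq, of "basis_vec i"] basis_vec_l2 by (auto simp: op_add_def op_scalar_def)
    thus "d (basis_vec i) = (\<lambda>n. (D (basis_vec i) i - c) * basis_vec i n)"
      by (subst (asm) diag_op_basis[OF D(1)]) (simp add: algebra_simps)
  qed
  ultimately have "d \<in> DKah" unfolding DKah_def using d by blast
  thus ?thesis using that eq imag_if_Re_zero[OF re] by metis
qed

lemma DKah_add_imag_in_DKCah:
  assumes "d \<in> DKah" shows "op_add d (op_scalar (\<i> * complex_of_real \<theta>)) \<in> DKCah"
proof -
  have d: "diag_op d" "compact_op d" "antiherm_op d" "bounded_op d"
    using assms unfolding DKah_def by (auto intro: diag_op_bounded)
  have "KC_op (op_add d (op_scalar (\<i> * complex_of_real \<theta>)))"
    unfolding KC_op_def using d(2) by (auto simp: op_eq_def)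
  thus ?thesis unfolding DKCah_def using d
    by (simp add: diag_op_add diag_op_scalar antiherm_op_add bounded_op_scalar antiherm_op_scalar)
qed

lemma norms_sub_DKah_eq_norms_add:
  "(\<lambda>d. op_norm (op_sub K d)) ` DKah = (\<lambda>d. op_norm (op_add K d)) ` DKah"
proof (rule image_eq_if_values_match)
  have "op_sub K d = op_add K (\<lambda>x n. - d x n)" "op_add K d = op_sub K (\<lambda>x n. - d x n)" for d
    by (auto simp: op_sub_def op_add_def)
  thus "\<exists>d'\<in>DKah. op_norm (op_sub K d) = op_norm (op_add K d')"
    and "\<exists>d'\<in>DKah. op_norm (op_add K d) = op_norm (op_sub K d')" if "d \<in> DKah" for d
    using DKah_neg[OF that] by metis+
qed

lemma norms_quotient_DBah_eq:
  assumes eq: "op_eq X (op_add K (op_scalar c))" and re: "Re c = 0"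
  shows "(\<lambda>D. op_norm (op_sub X D)) ` DBah = (\<lambda>D. op_norm (op_add K D)) ` DBah"
proof (rule image_eq_if_values_match)
  have swap: "op_sub (op_scalar c) D \<in> DBah" if "D \<in> DBah" for D
    using that antiherm_op_scalar[OF re] unfolding DBah_def
    by (auto intro: diag_op_sub diag_op_scalar antiherm_op_sub bounded_op_scalar diag_op_bounded)
  have "op_eq (op_sub X D) (op_add K (op_sub (op_scalar c) D))"
    and "op_eq (op_add K D) (op_sub X (op_sub (op_scalar c) D))" for D
    using op_eqD[OF eq] by (auto intro!: op_eqI simp: op_add_def op_sub_def op_scalar_def)
  thus "\<exists>D'\<in>DBah. op_norm (op_sub X D) = op_norm (op_add K D')"
    and "\<exists>D'\<in>DBah. op_norm (op_add K D) = op_norm (op_sub X D')" if "D \<in> DBah" for D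
    using swap[OF that] op_norm_cong by blast+
qed

lemma norms_quotient_DKCah_eq:
  assumes eq: "op_eq X (op_add K (op_scalar c))" and re: "Re c = 0"
  shows "(\<lambda>D. op_norm (op_sub X D)) ` DKCah =
         (\<lambda>(d, \<theta>::real). op_norm
              (op_add (op_add (op_add K (op_scalar (\<i> * complex_of_real (Im c)))) d)
                      (op_scalar (\<i> * complex_of_real \<theta>)))) ` (DKah \<times> UNIV)"
proof (rule image_eq_if_values_match)
  let ?N = "\<lambda>(d, \<theta>::real). op_norm
              (op_add (op_add (op_add K (op_scalar (\<i> * complex_of_real (Im c)))) d)
                      (op_scalar (\<i> * complex_of_real \<theta>)))"
  have X: "X x = op_add K (op_scalar (\<i> * complex_of_real (Im c))) x" if "l2 x" for x
    using op_eqD[OF eq that] imag_if_Re_zero[OF re] by simp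
  fix D assume "D \<in> DKCah"
  then obtain d \<theta> where d: "d \<in> DKah" and D: "op_eq D (op_add d (op_scalar (\<i> * complex_of_real \<theta>)))"
    by (rule DKCah_decomp)
  have "op_eq (op_sub X D) (op_add (op_add (op_add K (op_scalar (\<i> * complex_of_real (Im c))))
      (\<lambda>x n. - d x n)) (op_scalar (\<i> * complex_of_real (- \<theta>))))"
    using X op_eqD[OF D] by (auto intro!: op_eqI simp: op_add_def op_sub_def op_scalar_def)
  hence "op_norm (op_sub X D) = ?N ((\<lambda>x n. - d x n), - \<theta>)" by (simp add: op_norm_cong)
  thus "\<exists>p\<in>DKah \<times> UNIV. op_norm (op_sub X D) = ?N p" using DKah_neg[OF d] by blast
next
  let ?N = "\<lambda>(d, \<theta>::real). op_norm
              (op_add (op_add (op_add K (op_scalar (\<i> * complex_of_real (Im c)))) d)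
                      (op_scalar (\<i> * complex_of_real \<theta>)))"
  have X: "X x = op_add K (op_scalar (\<i> * complex_of_real (Im c))) x" if "l2 x" for x
    using op_eqD[OF eq that] imag_if_Re_zero[OF re] by simp
  fix p assume "p \<in> DKah \<times> (UNIV :: real set)"
  then obtain d \<theta> where p: "p = (d, \<theta>)" and d: "d \<in> DKah" by blast
  let ?D = "op_add (\<lambda>x n. - d x n) (op_scalar (\<i> * complex_of_real (- \<theta>)))"
  have "op_eq (op_add (op_add (op_add K (op_scalar (\<i> * complex_of_real (Im c)))) d)
      (op_scalar (\<i> * complex_of_real \<theta>))) (op_sub X ?D)"
    using X by (auto intro!: op_eqI simp: op_add_def op_sub_def op_scalar_def)
  thus "\<exists>D\<in>DKCah. ?N p = op_norm (op_sub X D)"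
    using DKah_add_imag_in_DKCah[OF DKah_neg[OF d], of "- \<theta>"] op_norm_cong p by fastforce
qed

lemma Inf_quotient_norms_KCah:
  assumes X: "X \<in> KCah" and K: "compact_op K" and eq: "op_eq X (op_add K (op_scalar c))"
  shows "Inf ((\<lambda>D. op_norm (op_sub X D)) ` DKCah) = Inf ((\<lambda>d. op_norm (op_sub K d)) ` DKah)
    \<and> Inf ((\<lambda>D. op_norm (op_sub X D)) ` DKCah) = Inf ((\<lambda>D. op_norm (op_sub X D)) ` DBah)"
proof -
  have Xb: "bounded_op X" and Xa: "antiherm_op X" using X unfolding KCah_def by auto
  have re: "Re c = 0" by (rule antiherm_scalar_part_imaginary[OF Xa K eq])
  have "K \<in> Kah" unfolding Kah_def using K antiherm_compact_part[OF Xb Xa eq re] by blast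
  from Inf_diag_quotients_eq[OF this, of "Im c"] show ?thesis
    unfolding norms_quotient_DKCah_eq[OF eq re] norms_quotient_DBah_eq[OF eq re]
      norms_sub_DKah_eq_norms_add
    by simp
qed

lemma finsler_norm_eq_quotient_norms:
  assumes b: "diag_op b" "selfadj_op b" "\<forall>i j. i \<noteq> j \<longrightarrow> b (basis_vec i) i \<noteq> b (basis_vec j) j"
    and X: "X \<in> KCah"
  shows "(\<forall>K c. compact_op K \<and> op_eq X (op_add K (op_scalar c)) \<longrightarrow>
          finsler_norm b (op_comm X b) = Inf ((\<lambda>d. op_norm (op_sub K d)) ` DKah))
    \<and> finsler_norm b (op_comm X b) = Inf ((\<lambda>D. op_norm (op_sub X D)) ` DKCah)
    \<and> finsler_norm b (op_comm X b) = Inf ((\<lambda>D. op_norm (op_sub X D)) ` DBah)"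
proof -
  have finsler: "finsler_norm b (op_comm X b) = Inf ((\<lambda>D. op_norm (op_sub X D)) ` DKCah)"
    unfolding finsler_norm_def finsler_set_eq[OF b X] ..
  obtain K0 c0 where "compact_op K0" "op_eq X (op_add K0 (op_scalar c0))"
    using X unfolding KCah_def KC_op_def by blast
  thus ?thesis using finsler Inf_quotient_norms_KCah[OF X] by metis
qed

theorem mainTheorem11:
  shows "(\<forall>K (t::real). K \<in> Kah \<longrightarrow>
      Inf ((\<lambda>D. op_norm (op_add K D)) ` DBah)
        = Inf ((\<lambda>(d, \<theta>::real). op_norm
              (op_add (op_add (op_add K (op_scalar (\<i> * complex_of_real t))) d)
                      (op_scalar (\<i> * complex_of_real \<theta>)))) ` (DKah \<times> UNIV))
    \<and> Inf ((\<lambda>(d, \<theta>::real). op_norm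
              (op_add (op_add (op_add K (op_scalar (\<i> * complex_of_real t))) d)
                      (op_scalar (\<i> * complex_of_real \<theta>)))) ` (DKah \<times> UNIV))
        = Inf ((\<lambda>d. op_norm (op_add K d)) ` DKah))
   \<and>
   (\<forall>b X. compact_op b \<and> selfadj_op b \<and> diag_op b \<and>
      (\<forall>i j. i \<noteq> j \<longrightarrow> b (basis_vec i) i \<noteq> b (basis_vec j) j) \<and>
      X \<in> KCah \<longrightarrow>
      (\<forall>K' c. compact_op K' \<and> op_eq X (op_add K' (op_scalar c)) \<longrightarrow>
          finsler_norm b (op_comm X b) = Inf ((\<lambda>d. op_norm (op_sub K' d)) ` DKah))
      \<and> finsler_norm b (op_comm X b) = Inf ((\<lambda>D. op_norm (op_sub X D)) ` DKCah)
      \<and> finsler_norm b (op_comm X b) = Inf ((\<lambda>D. op_norm (op_sub X D)) ` DBah))"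
    (is "(\<forall>K t. ?quotients K t) \<and> (\<forall>b X. ?hyps b X \<longrightarrow> ?finsler b X)")
proof (rule conjI; intro allI)
  show "?quotients K t" for K t
    using Inf_diag_quotients_eq by blast
  show "?hyps b X \<longrightarrow> ?finsler b X" for b X
    using finsler_norm_eq_quotient_norms by blast
qed

end
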